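(* Let $G$ be a $k$-tree with at least $k+4$ vertices. Then there do not exist two adjacent vertices $v,w$ of degree exactly $k+1$ such that each of $v$ and $w$ is adjacent to a vertex of degree at most $k$.
   Context: $G$ is a finite simple undirected graph. A $k$-tree is a graph having a vertex ordering $\phi:V\to\{1,\dots,|V|\}$ such that, for every vertex $v$, the set of neighbours of $v$ preceding it in $\phi$ is a clique of size exactly $\min(k,\phi(v)-1)$. *)

theory Defs
  imports Main
begin

definition simple_graph :: "'a set \<Rightarrow> ('a \<Rightarrow> 'a \<Rightarrow> bool) \<Rightarrow> bool" where
  "simple_graph V E \<longleftrightarrow> finite V \<and> (\<forall>u v. E u v \<longrightarrow> u \<in> V \<and> v \<in> V)
     \<and> (\<forall>u v. E u v \<longrightarrow> E v u) \<and> (\<forall>v. \<not> E v v)"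

definition neighbours :: "'a set \<Rightarrow> ('a \<Rightarrow> 'a \<Rightarrow> bool) \<Rightarrow> 'a \<Rightarrow> 'a set" where
  "neighbours V E v = {u \<in> V. E v u}"

definition degree :: "'a set \<Rightarrow> ('a \<Rightarrow> 'a \<Rightarrow> bool) \<Rightarrow> 'a \<Rightarrow> nat" where
  "degree V E v = card (neighbours V E v)"

definition is_clique :: "('a \<Rightarrow> 'a \<Rightarrow> bool) \<Rightarrow> 'a set \<Rightarrow> bool" where
  "is_clique E C \<longleftrightarrow> (\<forall>x\<in>C. \<forall>y\<in>C. x \<noteq> y \<longrightarrow> E x y)"

definition k_tree :: "nat \<Rightarrow> 'a set \<Rightarrow> ('a \<Rightarrow> 'a \<Rightarrow> bool) \<Rightarrow> bool" where
  "k_tree k V E \<longleftrightarrow> simple_graph V E \<and>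
     (\<exists>phi :: 'a \<Rightarrow> nat. bij_betw phi V {1..card V} \<and>
        (\<forall>v\<in>V. let P = {u \<in> neighbours V E v. phi u < phi v} in
            is_clique E P \<and> card P = min k (phi v - 1)))"

end

(* Fix an ordering witnessing the k-tree. Call its first k + 1 vertices the root (they form a
   clique), and call c a child of u if c lies outside the root and u is one of the k earlier
   neighbours of c. Every vertex has k neighbours that are not its children, so a vertex of
   degree at most k has no child and one of degree k + 1 at most one.
   For the configuration v, w, x, y let B = {v, w, x, y} and let S be the union of the root and
   the children of v and w. Then S contains every child of a vertex of B and has at most
   k + 3 < |V| elements. The first vertex outside S has k earlier neighbours; they lie in S but
   not in B, since otherwise that vertex would be in S as a child. So |S - B| >= k. On the
   other hand, whether one of v, w is the parent of the other or both lie in the root, enough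
   of B lies in S to force |S - B| <= k - 1. *)

theory Submission
  imports Defs
begin

text \<open>Only the sizes of the earlier neighbourhoods in a k-tree ordering matter below.\<close>

locale k_ordering =
  fixes k :: nat and V :: "'a set" and E :: "'a \<Rightarrow> 'a \<Rightarrow> bool" and phi :: "'a \<Rightarrow> nat"
  assumes simple: "simple_graph V E"
    and bij: "bij_betw phi V {1..card V}"
    and card_earlier_neighbours:
      "\<And>v. v \<in> V \<Longrightarrow> card {u \<in> neighbours V E v. phi u < phi v} = min k (phi v - 1)"
begin

definition earlier_nbrs :: "'a \<Rightarrow> 'a set" where
  "earlier_nbrs v = {u \<in> neighbours V E v. phi u < phi v}"

definition root :: "'a set" where
  "root = {u \<in> V. phi u \<le> k + 1}"

definition children :: "'a \<Rightarrow> 'a set" where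
  "children u = {c \<in> V. k + 2 \<le> phi c \<and> E u c \<and> phi u < phi c}"

lemma finite_V: "finite V"
  using simple by (simp add: simple_graph_def)

lemma edge_in_V: "E u v \<Longrightarrow> u \<in> V \<and> v \<in> V"
  using simple by (simp add: simple_graph_def)

lemma edge_sym: "E u v \<Longrightarrow> E v u"
  using simple by (simp add: simple_graph_def)

lemma edge_irrefl: "\<not> E v v"
  using simple by (simp add: simple_graph_def)

lemma phi_inj: "u \<in> V \<Longrightarrow> w \<in> V \<Longrightarrow> phi u = phi w \<Longrightarrow> u = w"
  using bij by (auto simp: bij_betw_def dest: inj_onD)

lemma card_earlier_nbrs: "v \<in> V \<Longrightarrow> card (earlier_nbrs v) = min k (phi v - 1)"
  by (simp add: earlier_nbrs_def card_earlier_neighbours)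

lemma mem_earlier_nbrs: "u \<in> earlier_nbrs v \<longleftrightarrow> u \<in> V \<and> E v u \<and> phi u < phi v"
  by (auto simp: earlier_nbrs_def neighbours_def)

lemma mem_root: "u \<in> root \<longleftrightarrow> u \<in> V \<and> phi u \<le> k + 1"
  by (simp add: root_def)

lemma mem_children: "c \<in> children u \<longleftrightarrow> c \<in> V \<and> k + 2 \<le> phi c \<and> E u c \<and> phi u < phi c"
  by (simp add: children_def)

lemma card_phi_less:
  assumes "i \<le> card V + 1"
  shows "card {z \<in> V. phi z < i} = i - 1"
proof -
  have "phi ` {z \<in> V. phi z < i} = {1..<i}"
    using bij assms by (force simp: bij_betw_def)
  moreover have "inj_on phi {z \<in> V. phi z < i}"
    using bij by (auto simp: bij_betw_def intro: inj_on_subset)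
  ultimately show ?thesis
    by (metis card_atLeastLessThan card_image)
qed

lemma card_root: "k + 1 \<le> card V \<Longrightarrow> card root = k + 1"
  using card_phi_less[of "k + 2"] by (simp add: root_def less_Suc_eq_le)

lemma earlier_nbrs_eq_earlier:
  assumes "u \<in> V" "phi u \<le> k + 1"
  shows "earlier_nbrs u = {z \<in> V. phi z < phi u}"
proof (rule card_subset_eq)
  show "earlier_nbrs u \<subseteq> {z \<in> V. phi z < phi u}"
    by (auto simp: mem_earlier_nbrs)
  have "phi u \<le> card V"
    using assms(1) bij by (auto simp: bij_betw_def)
  then show "card (earlier_nbrs u) = card {z \<in> V. phi z < phi u}"
    using assms card_earlier_nbrs card_phi_less[of "phi u"] by simp
qed (use finite_V in simp)

lemma root_adjacent:
  assumes "a \<in> root" "b \<in> root" "a \<noteq> b"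
  shows "E a b"
proof -
  have later_adjacent: "E b a" if "a \<in> root" "b \<in> root" "phi a < phi b" for a b
  proof -
    have "a \<in> earlier_nbrs b"
      using that earlier_nbrs_eq_earlier[of b] by (simp add: mem_root)
    then show ?thesis
      by (simp add: mem_earlier_nbrs)
  qed
  have "phi a \<noteq> phi b"
    using assms phi_inj by (auto simp: mem_root)
  then have "phi a < phi b \<or> phi b < phi a"
    by linarith
  then show ?thesis
    using later_adjacent[of a b] later_adjacent[of b a] assms edge_sym by blast
qed

lemma adjacent_cases:
  assumes "E u z"
  shows "z \<in> children u \<or> u \<in> children z \<or> (u \<in> root \<and> z \<in> root)"
proof -
  have "u \<in> V" "z \<in> V" "phi u \<noteq> phi z"
    using assms edge_in_V edge_irrefl phi_inj by blast+
  then show ?thesis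
    using assms edge_sym by (auto simp: mem_children mem_root)
qed

lemma children_root_disjoint: "c \<in> children u \<Longrightarrow> c \<notin> root"
  by (simp add: mem_children mem_root)

lemma finite_root: "finite root"
  using finite_V by (simp add: root_def)

lemma finite_children: "finite (children u)"
  using finite_V by (simp add: children_def)

lemma degree_ge_children:
  assumes u: "u \<in> V" and large: "k + 1 \<le> card V"
  shows "k + card (children u) \<le> degree V E u"
proof -
  obtain A where A: "A \<subseteq> neighbours V E u" "card A = k" "A \<inter> children u = {}"
  proof (cases "k + 1 \<le> phi u")
    case True
    have "earlier_nbrs u \<subseteq> neighbours V E u"
      by (auto simp: earlier_nbrs_def)
    moreover have "card (earlier_nbrs u) = k"
      using True card_earlier_nbrs[OF u] by simp
    moreover have "earlier_nbrs u \<inter> children u = {}"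
      by (auto simp: mem_earlier_nbrs mem_children)
    ultimately show ?thesis
      by (rule that)
  next
    case False
    then have "u \<in> root"
      using u by (simp add: mem_root)
    have "root - {u} \<subseteq> neighbours V E u"
      using \<open>u \<in> root\<close> root_adjacent by (auto simp: neighbours_def mem_root)
    moreover have "card (root - {u}) = k"
      using \<open>u \<in> root\<close> card_root[OF large] finite_V by (simp add: root_def)
    moreover have "(root - {u}) \<inter> children u = {}"
      using children_root_disjoint by blast
    ultimately show ?thesis
      by (rule that)
  qed
  have "children u \<subseteq> neighbours V E u"
    by (auto simp: mem_children neighbours_def)
  moreover have "finite (neighbours V E u)"
    using finite_V by (simp add: neighbours_def)
  ultimately have "card (A \<union> children u) \<le> degree V E u"
    unfolding degree_def using A(1) by (intro card_mono) auto
  moreover have "card (A \<union> children u) = k + card (children u)"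
    using A \<open>finite (neighbours V E u)\<close> \<open>children u \<subseteq> neighbours V E u\<close>
    by (metis card_Un_disjoint finite_subset)
  ultimately show ?thesis
    by simp
qed

lemma card_children_le:
  "u \<in> V \<Longrightarrow> k + 1 \<le> card V \<Longrightarrow> degree V E u \<le> k + m \<Longrightarrow> card (children u) \<le> m"
  using degree_ge_children by fastforce

lemma children_eq_singleton:
  assumes "u \<in> V" "k + 1 \<le> card V" "degree V E u \<le> k + 1" "c \<in> children u"
  shows "children u = {c}"
  using card_children_le[OF assms(1-3)] assms(4) finite_children
  by (auto simp: card_le_Suc0_iff_eq)

lemma k_le_card_closed_diff:
  assumes "root \<subseteq> S" "S \<subseteq> V" "card S < card V"
    and closed: "\<And>b. b \<in> B \<Longrightarrow> children b \<subseteq> S"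
  shows "k \<le> card (S - B)"
proof -
  have "V - S \<noteq> {}"
    using assms(2,3) by auto
  then obtain r where r: "r \<in> V - S" and r_min: "\<And>z. z \<in> V - S \<Longrightarrow> phi r \<le> phi z"
    using ex_has_least_nat[of "\<lambda>z. z \<in> V - S" _ phi] by blast
  have late: "k + 2 \<le> phi r"
    using r assms(1) by (force simp: mem_root)
  have "earlier_nbrs r \<subseteq> S - B"
  proof
    fix z assume z: "z \<in> earlier_nbrs r"
    then have "z \<in> S"
      using r_min by (force simp: mem_earlier_nbrs)
    moreover have "r \<in> children z"
      using z r late edge_sym by (auto simp: mem_earlier_nbrs mem_children)
    then have "z \<notin> B"
      using closed r by blast
    ultimately show "z \<in> S - B"
      by simp
  qed
  moreover have "finite (S - B)"
    using assms(2) finite_V finite_subset by blast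
  ultimately have "card (earlier_nbrs r) \<le> card (S - B)"
    by (rule card_mono[rotated])
  then show ?thesis
    using card_earlier_nbrs[of r] r late by simp
qed

text \<open>The common child t is the vertex numbered k + 2; z is the one root vertex it is not
  adjacent to.\<close>

lemma common_child_of_root:
  assumes "k + 2 \<le> card V"
  obtains t z where "z \<in> root" "\<And>a. a \<in> root - {z} \<Longrightarrow> t \<in> children a"
proof -
  have "k + 2 \<in> phi ` V"
    using bij assms by (simp add: bij_betw_def)
  then obtain t where t: "t \<in> V" "phi t = k + 2"
    by auto
  have earlier_root: "earlier_nbrs t \<subseteq> root"
    using t by (auto simp: mem_earlier_nbrs mem_root)
  have card_root_eq: "card root = Suc (card (earlier_nbrs t))"
    using card_root card_earlier_nbrs[OF t(1)] t assms by simp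
  then have "earlier_nbrs t \<noteq> root"
    by auto
  then obtain z where z: "z \<in> root" "z \<notin> earlier_nbrs t"
    using earlier_root by blast
  have earlier_t: "earlier_nbrs t = root - {z}"
  proof (rule card_subset_eq)
    show "card (earlier_nbrs t) = card (root - {z})"
      using card_root_eq z(1) finite_root by simp
  qed (use earlier_root z finite_root in auto)
  show ?thesis
  proof (rule that)
    show "z \<in> root"
      by fact
    fix a
    assume "a \<in> root - {z}"
    then have "a \<in> earlier_nbrs t"
      using earlier_t by simp
    then show "t \<in> children a"
      using t edge_sym by (simp add: mem_earlier_nbrs mem_children)
  qed
qed

lemma card_root_diff:
  assumes "k + 1 \<le> card V" "A \<subseteq> root"
  shows "card (root - A) + card A = k + 1"
proof -
  have "finite A"
    using assms(2) finite_root finite_subset by blast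
  then show ?thesis
    using assms card_root card_Diff_subset[of A root] card_mono[OF finite_root assms(2)] by simp
qed

end

lemma k_tree_imp_k_ordering: "k_tree k V E \<Longrightarrow> \<exists>phi. k_ordering k V E phi"
  unfolding k_tree_def k_ordering_def Let_def by blast

locale forbidden_config = k_ordering +
  fixes v w x y :: 'a
  assumes large: "k + 4 \<le> card V"
    and in_V: "v \<in> V" "w \<in> V" "x \<in> V" "y \<in> V"
    and edges: "E v w" "E v x" "E w y"
    and degrees: "degree V E v = k + 1" "degree V E w = k + 1"
      "degree V E x \<le> k" "degree V E y \<le> k"
begin

lemma swapped: "forbidden_config k V E phi w v y x"
  using large in_V edges edge_sym degrees
  by unfold_locales auto

lemma children_x: "children x = {}" and children_y: "children y = {}"
  using card_children_le[of _ 0] in_V large degrees finite_children by auto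

lemma children_v: "c \<in> children v \<Longrightarrow> children v = {c}"
  and children_w: "c \<in> children w \<Longrightarrow> children w = {c}"
  using children_eq_singleton in_V large degrees by auto

lemma distinct_vertices: "v \<noteq> w" "v \<noteq> x" "w \<noteq> y" "x \<noteq> w" "y \<noteq> v"
  using edges edge_irrefl degrees by auto

lemma k_le_card_rest: "k \<le> card ((root \<union> children v \<union> children w) - {v, w, x, y})"
proof (rule k_le_card_closed_diff)
  have "card (root \<union> children v \<union> children w) \<le> card root + card (children v) + card (children w)"
    by (meson card_Un_le add_right_mono order_trans)
  moreover have "card root = k + 1"
    using card_root large by simp
  moreover have "card (children v) \<le> 1" "card (children w) \<le> 1"
    using card_children_le[of _ 1] in_V large degrees by auto
  ultimately show "card (root \<union> children v \<union> children w) < card V"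
    using large by linarith
qed (use children_x children_y in \<open>auto simp: root_def children_def\<close>)

lemma k_le_card_root_diff:
  assumes "(root \<union> children v \<union> children w) - {v, w, x, y} \<subseteq> root - A"
  shows "k \<le> card (root - A)"
  using k_le_card_rest card_mono[OF _ assms] finite_V by (simp add: root_def)

lemma not_parent: "w \<notin> children v"
proof
  assume w: "w \<in> children v"
  have root: "v \<in> root" "x \<in> root"
    using adjacent_cases[OF edges(2)] children_v[OF w] children_x distinct_vertices by auto
  have "y \<in> children w"
    using adjacent_cases[OF edges(3)] children_y children_root_disjoint[OF w] by auto
  then have "k \<le> card (root - {v, x})"
    using children_v[OF w] children_w by (intro k_le_card_root_diff) auto
  moreover have "card (root - {v, x}) + 2 = k + 1"
    using card_root_diff[of "{v, x}"] root distinct_vertices large by simp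
  ultimately show False
    by linarith
qed

lemma x_not_in_root: "v \<in> root \<Longrightarrow> w \<in> root \<Longrightarrow> x \<notin> root"
proof
  assume root: "v \<in> root" "w \<in> root" "x \<in> root"
  have "k + 2 \<le> card V"
    using large by simp
  then obtain t z where "z \<in> root" and common: "\<And>a. a \<in> root - {z} \<Longrightarrow> t \<in> children a"
    using common_child_of_root by blast
  have "x = z"
    using common children_x root(3) by blast
  then have "t \<in> children v" "t \<in> children w"
    using common root distinct_vertices by auto
  then have "children v = {t}" "children w = {t}"
    using children_v children_w by auto
  then have "k \<le> card (root - {v, w, x} \<union> {t})"
    by (intro k_le_card_rest[THEN order_trans] card_mono) (auto simp: root_def finite_V)
  also have "\<dots> \<le> card (root - {v, w, x}) + 1"
    using card_Un_le[of _ "{t}"] by simp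
  finally have "k \<le> card (root - {v, w, x}) + 1" .
  moreover have "card (root - {v, w, x}) + 3 = k + 1"
    using card_root_diff[of "{v, w, x}"] root distinct_vertices large by simp
  ultimately show False
    by linarith
qed

lemma not_root_edge: "\<not> (v \<in> root \<and> w \<in> root)"
proof
  assume root: "v \<in> root \<and> w \<in> root"
  have "x \<notin> root" "y \<notin> root"
    using x_not_in_root forbidden_config.x_not_in_root[OF swapped] root by auto
  then have "x \<in> children v" "y \<in> children w"
    using adjacent_cases[OF edges(2)] adjacent_cases[OF edges(3)] children_x children_y by auto
  then have "k \<le> card (root - {v, w})"
    using children_v children_w by (intro k_le_card_root_diff) auto
  moreover have "card (root - {v, w}) + 2 = k + 1"
    using card_root_diff[of "{v, w}"] root distinct_vertices large by simp
  ultimately show False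
    by linarith
qed

lemma impossible: False
  using adjacent_cases[OF edges(1)] not_parent forbidden_config.not_parent[OF swapped] not_root_edge
  by blast

end

theorem mainTheorem13:
  fixes k :: nat and V :: "'a set" and E :: "'a \<Rightarrow> 'a \<Rightarrow> bool"
  assumes "k_tree k V E"
    and "card V \<ge> k + 4"
  shows "\<not> (\<exists>v\<in>V. \<exists>w\<in>V. E v w \<and> degree V E v = k + 1 \<and> degree V E w = k + 1
              \<and> (\<exists>x\<in>V. E v x \<and> degree V E x \<le> k)
              \<and> (\<exists>y\<in>V. E w y \<and> degree V E y \<le> k))"
proof
  assume "\<exists>v\<in>V. \<exists>w\<in>V. E v w \<and> degree V E v = k + 1 \<and> degree V E w = k + 1
              \<and> (\<exists>x\<in>V. E v x \<and> degree V E x \<le> k)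
              \<and> (\<exists>y\<in>V. E w y \<and> degree V E y \<le> k)"
  then obtain v w x y where "v \<in> V" "w \<in> V" "x \<in> V" "y \<in> V" "E v w" "E v x" "E w y"
    "degree V E v = k + 1" "degree V E w = k + 1" "degree V E x \<le> k" "degree V E y \<le> k"
    by blast
  moreover obtain phi where "k_ordering k V E phi"
    using k_tree_imp_k_ordering[OF assms(1)] by blast
  ultimately have "forbidden_config k V E phi v w x y"
    using assms(2) by (simp add: forbidden_config_def forbidden_config_axioms_def)
  then show False
    by (rule forbidden_config.impossible)
qed

end
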